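(* Let $m$ be a positive integer. The distortion function of $F_{2m}$ in $G_{m,m}$ satisfies $\delta_{F_{2m}}^{G_{m,m}}(n)\simeq n^{m+1}$, and the distortion function of $F_{2m-1}$ in $G_{m,m-1}$ satisfies $\delta_{F_{2m-1}}^{G_{m,m-1}}(n)\simeq n^{m}$.
   Context: For integers $m\ge1$ and $0\le k\le m$, $G_{m,k}=\langle s_1,\dots,s_{m+k+1}\mid [s_i,s_{i+1}]=1\ (1\le i\le m);\ s_{m+j+1}^{-1}s_js_{m+j+1}=s_{m+j}\ (1\le j\le k)\rangle$. Let $A_i=s_{i+1}^{-1}s_i$ for $1\le i\le m$ and $B_j=s_{m+j+1}^{-1}s_j$ for $1\le j\le k$; these generate a free subgroup $F_{m+k}$ of rank $m+k$, and $G_{m,k}\cong F_{m+k}\rtimes\mathbb{Z}$. Distortion is taken with respect to the generating sets $\{A_i,B_j\}$ of $F_{m+k}$ and $\{s_i\}$ of $G_{m,k}$: $\delta_H^G(n)=\max\{d_H(1,w):w\in H,d_G(1,w)\le n\}$; $f\simeq g$ means $f\preceq g\preceq f$ where $f\preceq g$ iff $f(n)\le Cg(Cn+C)+Cn+C$ for some $C>0$. *)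

theory Defs
  imports Main
begin

text \<open>Letters: (i, e) with e = False meaning the generator x_i and e = True its inverse.\<close>
type_synonym letter = "nat \<times> bool"

definition inv_letter :: "letter \<Rightarrow> letter" where
  "inv_letter x = (fst x, \<not> snd x)"

definition inv_word :: "letter list \<Rightarrow> letter list" where
  "inv_word w = rev (map inv_letter w)"

definition gen :: "nat \<Rightarrow> letter" where "gen i = (i, False)"
definition ginv :: "nat \<Rightarrow> letter" where "ginv i = (i, True)"

definition relators :: "nat \<Rightarrow> nat \<Rightarrow> letter list set" where
  "relators m k =
     {[ginv i, ginv (i+1), gen i, gen (i+1)] | i. 1 \<le> i \<and> i \<le> m} \<union>
     {[ginv (m+j+1), gen j, gen (m+j+1), ginv (m+j)] | j. 1 \<le> j \<and> j \<le> k}"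

definition valid_G :: "nat \<Rightarrow> nat \<Rightarrow> letter list \<Rightarrow> bool" where
  "valid_G m k w \<longleftrightarrow> (\<forall>x\<in>set w. 1 \<le> fst x \<and> fst x \<le> m + k + 1)"

inductive eqG :: "nat \<Rightarrow> nat \<Rightarrow> letter list \<Rightarrow> letter list \<Rightarrow> bool" for m k where
  refl: "eqG m k w w"
| sym: "eqG m k u v \<Longrightarrow> eqG m k v u"
| trans: "eqG m k u v \<Longrightarrow> eqG m k v w \<Longrightarrow> eqG m k u w"
| cancel: "eqG m k (u @ [x, inv_letter x] @ v) (u @ v)"
| rel: "r \<in> relators m k \<Longrightarrow> eqG m k (u @ r @ v) (u @ v)"

text \<open>Generators of the subgroup F_{m+k}: letter index i \<in> {1..m} stands for A_i,
  index m+j (1 \<le> j \<le> k) stands for B_j.\<close>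
definition valid_H :: "nat \<Rightarrow> nat \<Rightarrow> letter list \<Rightarrow> bool" where
  "valid_H m k w \<longleftrightarrow> (\<forall>x\<in>set w. 1 \<le> fst x \<and> fst x \<le> m + k)"

definition subgen :: "nat \<Rightarrow> nat \<Rightarrow> letter list" where
  "subgen m i = (if i \<le> m then [ginv (i+1), gen i] else [ginv (i+1), gen (i - m)])"

definition subst_letter :: "nat \<Rightarrow> letter \<Rightarrow> letter list" where
  "subst_letter m x = (if snd x then inv_word (subgen m (fst x)) else subgen m (fst x))"

definition subst :: "nat \<Rightarrow> letter list \<Rightarrow> letter list" where
  "subst m w = concat (map (subst_letter m) w)"

definition dG :: "nat \<Rightarrow> nat \<Rightarrow> letter list \<Rightarrow> nat" where
  "dG m k w = (LEAST n. \<exists>u. valid_G m k u \<and> length u = n \<and> eqG m k u w)"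

definition inH :: "nat \<Rightarrow> nat \<Rightarrow> letter list \<Rightarrow> bool" where
  "inH m k w \<longleftrightarrow> (\<exists>h. valid_H m k h \<and> eqG m k (subst m h) w)"

definition dH :: "nat \<Rightarrow> nat \<Rightarrow> letter list \<Rightarrow> nat" where
  "dH m k w = (LEAST n. \<exists>h. valid_H m k h \<and> length h = n \<and> eqG m k (subst m h) w)"

definition distortion :: "nat \<Rightarrow> nat \<Rightarrow> nat \<Rightarrow> nat" where
  "distortion m k n = Sup {dH m k w | w. valid_G m k w \<and> inH m k w \<and> dG m k w \<le> n}"

definition preceq :: "(nat \<Rightarrow> nat) \<Rightarrow> (nat \<Rightarrow> nat) \<Rightarrow> bool" (infix "\<preceq>\<^sub>d" 50) where
  "f \<preceq>\<^sub>d g \<longleftrightarrow> (\<exists>C>0. \<forall>n. f n \<le> C * g (C * n + C) + C * n + C)"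

definition simeq :: "(nat \<Rightarrow> nat) \<Rightarrow> (nat \<Rightarrow> nat) \<Rightarrow> bool" (infix "\<simeq>\<^sub>d" 50) where
  "f \<simeq>\<^sub>d g \<longleftrightarrow> f \<preceq>\<^sub>d g \<and> g \<preceq>\<^sub>d f"

end

(*
  For i \<le> m + 1 the word s_1^p s_i^-p is the product of the powers
  A_1^p, ..., A_(i-1)^p, because s_l and s_(l+1) commute.  For i = m + j + 1 the relator
  s_(m+j+1)^-1 s_j s_(m+j+1) = s_(m+j) gives the recursion
    s_j^p s_(m+j+1)^-p = (s_j^p s_(m+j)^-p) B_j (s_j^(p-1) s_(m+j+1)^-(p-1)),
  which raises the degree by one, so s_1^p s_(m+j+1)^-p has length O(|p|^(j+1)) in F.
  Hence conjugation by s_1^p stretches lengths in F by a factor O(|p|^k), and pushing s_1^p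
  through a word u of exponent sum 0, one letter at a time, writes u as a word of length
  O(|u|^(k+1)) in F.

  Sending s_i to (1, F_i) in the semidirect product of Z with the real
  functions on Z, where F_i = 0 for i \<le> m and F_(m+j)(y) = binomial(y + j - 2, j - 1), is a
  homomorphism.  The generators A_i, B_j of F have translation part 0 and change the value
  at 1 by at most 1, whereas s_(m+k+1)^N s_1^-N, of length 2N, has value
  binomial(N + k, k + 1) at 1.
*)
theory Submission
  imports Defs Complex_Main
begin

lemma inv_letter_inv [simp]: "inv_letter (inv_letter x) = x"
  by (simp add: inv_letter_def)

lemma fst_inv_letter [simp]: "fst (inv_letter x) = fst x"
  by (simp add: inv_letter_def)

lemma inv_letter_gen [simp]: "inv_letter (gen i) = ginv i" "inv_letter (ginv i) = gen i"
  by (simp_all add: gen_def ginv_def inv_letter_def)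

lemma inv_word_Nil [simp]: "inv_word [] = []"
  by (simp add: inv_word_def)

lemma inv_word_Cons [simp]: "inv_word (x # w) = inv_word w @ [inv_letter x]"
  by (simp add: inv_word_def)

lemma inv_word_append [simp]: "inv_word (u @ v) = inv_word v @ inv_word u"
  by (simp add: inv_word_def)

lemma inv_word_inv_word [simp]: "inv_word (inv_word w) = w"
  by (simp add: inv_word_def rev_map comp_def)

lemma length_inv_word [simp]: "length (inv_word w) = length w"
  by (simp add: inv_word_def)

lemma set_inv_word: "set (inv_word w) = inv_letter ` set w"
  by (simp add: inv_word_def)

definition word_pow :: "letter list \<Rightarrow> int \<Rightarrow> letter list" where
  "word_pow w p = (if 0 \<le> p then concat (replicate (nat p) w)
                   else concat (replicate (nat (- p)) (inv_word w)))"

lemma concat_replicate_snoc: "concat (replicate n w) @ w = w @ concat (replicate n w)"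
  by (induction n) auto

lemma inv_word_concat_replicate:
  "inv_word (concat (replicate n w)) = concat (replicate n (inv_word w))"
  by (induction n) (auto simp: concat_replicate_snoc)

lemma word_pow_0 [simp]: "word_pow w 0 = []"
  by (simp add: word_pow_def)

lemma word_pow_1 [simp]: "word_pow w 1 = w"
  by (simp add: word_pow_def)

lemma word_pow_minus_1 [simp]: "word_pow w (- 1) = inv_word w"
  by (simp add: word_pow_def)

lemma inv_word_word_pow [simp]: "inv_word (word_pow w p) = word_pow w (- p)"
  by (auto simp: word_pow_def inv_word_concat_replicate)

lemma word_pow_inv_word: "word_pow (inv_word w) p = word_pow w (- p)"
  by (auto simp: word_pow_def)

lemma length_word_pow: "length (word_pow w p) = nat \<bar>p\<bar> * length w"
  by (auto simp: word_pow_def length_concat sum_list_replicate)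

lemma set_word_pow: "set (word_pow w p) \<subseteq> set w \<union> inv_letter ` set w"
  by (auto simp: word_pow_def set_inv_word)

definition exp_sum :: "letter list \<Rightarrow> int" where
  "exp_sum w = (\<Sum>x\<leftarrow>w. if snd x then - 1 else 1)"

lemma exp_sum_Nil [simp]: "exp_sum [] = 0"
  by (simp add: exp_sum_def)

lemma exp_sum_Cons: "exp_sum (x # w) = (if snd x then - 1 else 1) + exp_sum w"
  by (simp add: exp_sum_def)

lemma exp_sum_append [simp]: "exp_sum (u @ v) = exp_sum u + exp_sum v"
  by (simp add: exp_sum_def)

lemma exp_sum_gen [simp]: "exp_sum [gen i] = 1" "exp_sum [ginv i] = - 1"
  by (simp_all add: exp_sum_def gen_def ginv_def)

lemma exp_sum_inv_word: "exp_sum (inv_word w) = - exp_sum w"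
  by (induction w) (auto simp: exp_sum_Cons inv_letter_def)

lemma exp_sum_replicate: "exp_sum (replicate n x) = int n * exp_sum [x]"
  by (induction n) (simp_all add: exp_sum_Cons algebra_simps)

lemma exp_sum_subgen [simp]: "exp_sum (subgen m i) = 0"
  by (simp add: subgen_def exp_sum_Cons gen_def ginv_def)

lemma exp_sum_subst [simp]: "exp_sum (subst m h) = 0"
  by (induction h) (simp_all add: subst_def subst_letter_def exp_sum_inv_word)

lemma subst_Nil [simp]: "subst m [] = []"
  by (simp add: subst_def)

lemma subst_Cons: "subst m (x # h) = subst_letter m x @ subst m h"
  by (simp add: subst_def)

lemma subst_append [simp]: "subst m (u @ v) = subst m u @ subst m v"
  by (simp add: subst_def)

lemma subst_inv_word: "subst m (inv_word h) = inv_word (subst m h)"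
  by (induction h) (simp_all add: subst_Cons subst_letter_def inv_letter_def)

lemma subst_word_pow: "subst m (word_pow h p) = word_pow (subst m h) p"
proof -
  have "subst m (concat (replicate n h)) = concat (replicate n (subst m h))" for n h
    by (induction n) simp_all
  then show ?thesis
    by (simp add: word_pow_def subst_inv_word)
qed

lemma valid_H_append [simp]: "valid_H m k (u @ v) \<longleftrightarrow> valid_H m k u \<and> valid_H m k v"
  by (auto simp: valid_H_def)

lemma valid_H_Cons: "valid_H m k (x # h) \<longleftrightarrow> valid_H m k [x] \<and> valid_H m k h"
  by (auto simp: valid_H_def)

lemma valid_H_inv_word: "valid_H m k h \<Longrightarrow> valid_H m k (inv_word h)"
  by (auto simp: valid_H_def set_inv_word)

lemma valid_H_word_pow: "valid_H m k h \<Longrightarrow> valid_H m k (word_pow h p)"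
  using set_word_pow[of h p] unfolding valid_H_def by fastforce

lemma le_Suc_power: "N \<le> (N + 1) ^ Suc d" for N :: nat
proof -
  have "N + 1 \<le> (N + 1) ^ Suc d"
    by (rule self_le_power) auto
  then show ?thesis by simp
qed

lemma mult_le_mult_Suc_power:
  fixes n d N :: nat
  assumes "n \<le> d"
  shows "n * N \<le> d * (N + 1) ^ d"
proof (cases d)
  case (Suc e)
  have "n * N \<le> d * N"
    using assms by (rule mult_le_mono1)
  also have "\<dots> \<le> d * (N + 1) ^ d"
    using mult_le_mono2[OF le_Suc_power[of N e], of d] Suc by simp
  finally show ?thesis .
qed (use assms in simp)

abbreviation spow :: "nat \<Rightarrow> int \<Rightarrow> letter list" where
  "spow i p \<equiv> word_pow [gen i] p"

abbreviation ratio :: "nat \<Rightarrow> nat \<Rightarrow> int \<Rightarrow> letter list" where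
  "ratio a b p \<equiv> spow a p @ spow b (- p)"

abbreviation conj_s1 :: "int \<Rightarrow> letter list \<Rightarrow> letter list" where
  "conj_s1 p w \<equiv> spow 1 p @ w @ spow 1 (- p)"

declare eqG.refl [simp] eqG.trans [trans]

context
  fixes m k :: nat
begin

abbreviation eq_G :: "letter list \<Rightarrow> letter list \<Rightarrow> bool" (infix "\<approx>" 50)
  where "u \<approx> v \<equiv> eqG m k u v"

lemma eqG_cong: "u \<approx> v \<Longrightarrow> a @ u @ b \<approx> a @ v @ b"
proof (induction rule: eqG.induct)
  case (cancel u x v)
  have "(a @ u) @ [x, inv_letter x] @ (v @ b) \<approx> (a @ u) @ (v @ b)"
    by (rule eqG.cancel)
  then show ?case by simp
next
  case (rel r u v)
  have "(a @ u) @ r @ (v @ b) \<approx> (a @ u) @ (v @ b)"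
    using rel by (rule eqG.rel)
  then show ?case by simp
qed (auto intro: eqG.sym eqG.trans)

lemma eqG_append: "u \<approx> u' \<Longrightarrow> v \<approx> v' \<Longrightarrow> u @ v \<approx> u' @ v'"
  by (metis append.right_neutral append_Nil eqG.trans eqG_cong)

lemma eqG_append_left: "v \<approx> v' \<Longrightarrow> u @ v \<approx> u @ v'"
  by (simp add: eqG_append)

lemma eqG_append_right: "u \<approx> u' \<Longrightarrow> u @ v \<approx> u' @ v"
  by (simp add: eqG_append)

lemma eqG_cancel_pair: "[x, inv_letter x] \<approx> []"
  using eqG.cancel[of m k "[]" x "[]"] by simp

lemma eqG_right_inverse: "w @ inv_word w \<approx> []"
proof (induction w)
  case (Cons x w)
  have "(x # w) @ inv_word (x # w) = [x] @ (w @ inv_word w) @ [inv_letter x]"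
    by simp
  also have "\<dots> \<approx> [x] @ [] @ [inv_letter x]"
    using Cons.IH by (rule eqG_cong)
  also have "\<dots> \<approx> []"
    using eqG_cancel_pair by simp
  finally show ?case .
qed simp

lemma eqG_left_inverse: "inv_word w @ w \<approx> []"
  using eqG_right_inverse[of "inv_word w"] by simp

lemma eqG_insert_inverse: "a @ b \<approx> a @ v @ inv_word v @ b"
  using eqG_cong[OF eqG_right_inverse[of v], of a b] by (simp add: eqG.sym)

lemma eqG_relator: "r \<in> relators m k \<Longrightarrow> r \<approx> []"
  using eqG.rel[of r m k "[]" "[]"] by simp

lemma eqG_inv_word: "u \<approx> v \<Longrightarrow> inv_word u \<approx> inv_word v"
proof (induction rule: eqG.induct)
  case (cancel u x v)
  have "inv_word v @ [x, inv_letter x] @ inv_word u \<approx> inv_word v @ inv_word u"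
    by (rule eqG.cancel)
  then show ?case by simp
next
  case (rel r u v)
  have "inv_word r \<approx> inv_word r @ r"
    using eqG_append_left[OF eqG_relator[OF rel]] by (simp add: eqG.sym)
  also have "\<dots> \<approx> []"
    by (rule eqG_left_inverse)
  finally have "inv_word v @ inv_word r @ inv_word u \<approx> inv_word v @ [] @ inv_word u"
    by (rule eqG_cong)
  then show ?case by simp
qed (auto intro: eqG.sym eqG.trans)

lemma eqG_move_left: "v @ u \<approx> w \<Longrightarrow> u \<approx> inv_word v @ w"
  using eqG_insert_inverse[of "[]" u "inv_word v"] eqG_append_left[of "v @ u" w "inv_word v"]
  by (auto intro: eqG.trans)

lemma eqG_inv_word_if_append_Nil: "a @ b \<approx> [] \<Longrightarrow> a \<approx> inv_word b"
  using eqG_insert_inverse[of a "[]" b] eqG_append_right[of "a @ b" "[]" "inv_word b"]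
  by (auto intro: eqG.trans)

lemma concat_replicate_eqG: "u \<approx> v \<Longrightarrow> concat (replicate n u) \<approx> concat (replicate n v)"
  by (induction n) (simp_all add: eqG_append)

lemma word_pow_eqG: "u \<approx> v \<Longrightarrow> word_pow u p \<approx> word_pow v p"
  by (simp add: word_pow_def concat_replicate_eqG eqG_inv_word)

lemma word_pow_succ: "word_pow w (p + 1) \<approx> word_pow w p @ w"
proof (cases "0 \<le> p")
  case True
  then have "word_pow w (p + 1) = word_pow w p @ w"
    by (simp add: word_pow_def nat_add_distrib concat_replicate_snoc)
  then show ?thesis by simp
next
  case False
  define n where "n = nat (- p - 1)"
  have a: "word_pow w (p + 1) = concat (replicate n (inv_word w))"
    using False by (simp add: word_pow_def n_def)
  have "nat (- p) = Suc n"
    using False by (simp add: n_def)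
  then have b: "word_pow w p = concat (replicate n (inv_word w)) @ inv_word w"
    using False by (simp add: word_pow_def concat_replicate_snoc)
  have "concat (replicate n (inv_word w)) @ [] \<approx> concat (replicate n (inv_word w)) @ inv_word w @ w"
    using eqG_append_left[OF eqG_left_inverse[of w]] by (rule eqG.sym)
  then show ?thesis by (simp add: a b)
qed

lemma word_pow_pred: "word_pow w (p - 1) \<approx> word_pow w p @ inv_word w"
proof -
  have "word_pow w p @ inv_word w \<approx> (word_pow w (p - 1) @ w) @ inv_word w"
    using eqG_append_right[OF word_pow_succ[of w "p - 1"], of "inv_word w"] by simp
  also have "\<dots> = word_pow w (p - 1) @ w @ inv_word w"
    by simp
  also have "\<dots> \<approx> word_pow w (p - 1) @ []"
    by (rule eqG_append_left[OF eqG_right_inverse])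
  finally show ?thesis by (simp add: eqG.sym)
qed

lemma word_pow_add: "word_pow w p @ word_pow w q \<approx> word_pow w (p + q)"
proof (induction q rule: int_induct[where k = 0])
  case (step1 i)
  have "word_pow w p @ word_pow w (i + 1) \<approx> (word_pow w p @ word_pow w i) @ w"
    using eqG_append_left[OF word_pow_succ] by simp
  also have "\<dots> \<approx> word_pow w (p + i) @ w"
    by (rule eqG_append_right[OF step1.IH])
  also have "\<dots> \<approx> word_pow w (p + (i + 1))"
    using word_pow_succ[of w "p + i"] by (simp add: eqG.sym add.assoc)
  finally show ?case .
next
  case (step2 i)
  have "word_pow w p @ word_pow w (i - 1) \<approx> (word_pow w p @ word_pow w i) @ inv_word w"
    using eqG_append_left[OF word_pow_pred] by simp
  also have "\<dots> \<approx> word_pow w (p + i) @ inv_word w"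
    by (rule eqG_append_right[OF step2.IH])
  also have "\<dots> \<approx> word_pow w (p + (i - 1))"
    using word_pow_pred[of w "p + i"] by (simp add: eqG.sym algebra_simps)
  finally show ?case .
qed simp

lemma conj_inv_word: "b @ x \<approx> y @ b \<Longrightarrow> b @ inv_word x \<approx> inv_word y @ b"
proof -
  assume h: "b @ x \<approx> y @ b"
  have "b @ inv_word x \<approx> inv_word y @ (y @ b) @ inv_word x"
    using eqG_insert_inverse[of "[]" "b @ inv_word x" "inv_word y"] by simp
  also have "\<dots> \<approx> inv_word y @ (b @ x) @ inv_word x"
    using eqG.sym[OF h] by (rule eqG_cong)
  also have "\<dots> = (inv_word y @ b) @ (x @ inv_word x) @ []"
    by simp
  also have "\<dots> \<approx> (inv_word y @ b) @ [] @ []"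
    by (rule eqG_cong[OF eqG_right_inverse])
  finally show ?thesis by simp
qed

lemma conj_concat_replicate:
  assumes "b @ x \<approx> y @ b"
  shows "b @ concat (replicate n x) \<approx> concat (replicate n y) @ b"
proof (induction n)
  case (Suc n)
  have "b @ concat (replicate (Suc n) x) = (b @ x) @ concat (replicate n x)"
    by simp
  also have "\<dots> \<approx> y @ b @ concat (replicate n x)"
    using eqG_append_right[OF assms] by simp
  also have "\<dots> \<approx> y @ concat (replicate n y) @ b"
    using Suc.IH by (rule eqG_append_left)
  finally show ?case by simp
qed simp

lemma conj_word_pow: "b @ x \<approx> y @ b \<Longrightarrow> b @ word_pow x p \<approx> word_pow y p @ b"
  by (simp add: word_pow_def conj_concat_replicate conj_inv_word)

lemma word_pow_commute:
  assumes "a @ b \<approx> b @ a"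
  shows "word_pow a p @ word_pow b q \<approx> word_pow b q @ word_pow a p"
proof -
  have "word_pow a p @ b \<approx> b @ word_pow a p"
    using conj_word_pow[OF eqG.sym[OF assms]] by (rule eqG.sym)
  then show ?thesis by (rule conj_word_pow)
qed

lemma concat_replicate_append_commute:
  assumes "a @ b \<approx> b @ a"
  shows "concat (replicate n (a @ b)) \<approx> concat (replicate n a) @ concat (replicate n b)"
proof (induction n)
  case (Suc n)
  have "concat (replicate (Suc n) (a @ b))
      \<approx> a @ (b @ concat (replicate n a)) @ concat (replicate n b)"
    using eqG_append_left[OF Suc.IH, of "a @ b"] by simp
  also have "\<dots> \<approx> a @ (concat (replicate n a) @ b) @ concat (replicate n b)"
    using conj_concat_replicate[OF eqG.sym[OF assms]] by (rule eqG_cong)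
  finally show ?case by simp
qed simp

lemma word_pow_append_commute:
  assumes ab: "a @ b \<approx> b @ a"
  shows "word_pow (a @ b) p \<approx> word_pow a p @ word_pow b p"
proof (cases "0 \<le> p")
  case True
  then show ?thesis
    using concat_replicate_append_commute[OF ab] by (simp add: word_pow_def)
next
  case False
  have ba': "inv_word b @ inv_word a \<approx> inv_word a @ inv_word b"
    using eqG_inv_word[OF ab] by simp
  have "word_pow (a @ b) p = concat (replicate (nat (- p)) (inv_word b @ inv_word a))"
    using False by (simp add: word_pow_def)
  also have "\<dots> \<approx> concat (replicate (nat (- p)) (inv_word a @ inv_word b))"
    by (rule concat_replicate_eqG[OF ba'])
  also have "\<dots> \<approx> word_pow a p @ word_pow b p"
    using False concat_replicate_append_commute[OF eqG.sym[OF ba']] by (simp add: word_pow_def)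
  finally show ?thesis .
qed

lemma commute_rel: "1 \<le> i \<Longrightarrow> i \<le> m \<Longrightarrow> [gen i, gen (i + 1)] \<approx> [gen (i + 1), gen i]"
proof -
  assume "1 \<le> i" "i \<le> m"
  then have "[ginv i, ginv (i + 1)] @ [gen i, gen (i + 1)] \<approx> []"
    by (intro eqG_relator) (auto simp: relators_def)
  then have "[ginv i, ginv (i + 1)] \<approx> inv_word [gen i, gen (i + 1)]"
    by (rule eqG_inv_word_if_append_Nil)
  from eqG_inv_word[OF this] show ?thesis
    by (simp add: eqG.sym)
qed

lemma commute_rel_inv: "1 \<le> i \<Longrightarrow> i \<le> m \<Longrightarrow> [gen i, ginv (i + 1)] \<approx> [ginv (i + 1), gen i]"
  using word_pow_commute[of "[gen i]" "[gen (i + 1)]" 1 "- 1"] commute_rel by simp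

lemma conj_rel: "1 \<le> j \<Longrightarrow> j \<le> k \<Longrightarrow> [ginv (m + j + 1), gen j] \<approx> [gen (m + j), ginv (m + j + 1)]"
proof -
  assume "1 \<le> j" "j \<le> k"
  then have "[ginv (m + j + 1), gen j] @ [gen (m + j + 1), ginv (m + j)] \<approx> []"
    by (intro eqG_relator) (auto simp: relators_def)
  then have "[ginv (m + j + 1), gen j] \<approx> inv_word [gen (m + j + 1), ginv (m + j)]"
    by (rule eqG_inv_word_if_append_Nil)
  then show ?thesis by simp
qed

lemma ratio_self: "ratio a a p \<approx> []"
  using word_pow_add[of "[gen a]" p "- p"] by simp

lemma ratio_split: "ratio a c p \<approx> ratio a b p @ ratio b c p"
  using eqG_insert_inverse[of "spow a p" "spow c (- p)" "spow b (- p)"] by simp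

lemma subgen_word_pow: "1 \<le> l \<Longrightarrow> l \<le> m \<Longrightarrow> word_pow (subgen m l) p \<approx> ratio l (l + 1) p"
proof -
  assume l: "1 \<le> l" "l \<le> m"
  have c: "[ginv (l + 1)] @ [gen l] \<approx> [gen l] @ [ginv (l + 1)]"
    using commute_rel_inv[OF l] by (simp add: eqG.sym)
  have "word_pow (subgen m l) p \<approx> word_pow [ginv (l + 1)] p @ spow l p"
    using l word_pow_append_commute[OF c] by (simp add: subgen_def)
  also have "\<dots> \<approx> spow l p @ word_pow [ginv (l + 1)] p"
    by (rule word_pow_commute[OF c])
  finally show ?thesis
    using word_pow_inv_word[of "[gen (l + 1)]"] by simp
qed

section \<open>Upper bound for the length in the subgroup\<close>

definition H_length_le :: "letter list \<Rightarrow> nat \<Rightarrow> bool" where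
  "H_length_le w L \<longleftrightarrow> (\<exists>h. valid_H m k h \<and> length h \<le> L \<and> subst m h \<approx> w)"

lemma H_length_le_mono: "H_length_le w L \<Longrightarrow> L \<le> L' \<Longrightarrow> H_length_le w L'"
  unfolding H_length_le_def by (meson le_trans)

lemma H_length_le_eqG: "H_length_le w L \<Longrightarrow> w \<approx> w' \<Longrightarrow> H_length_le w' L"
  unfolding H_length_le_def by (meson eqG.trans)

lemma H_length_le_Nil: "H_length_le [] 0"
  unfolding H_length_le_def by (rule exI[of _ "[]"]) (simp add: valid_H_def)

lemma H_length_le_append:
  "H_length_le u L1 \<Longrightarrow> H_length_le v L2 \<Longrightarrow> H_length_le (u @ v) (L1 + L2)"
  unfolding H_length_le_def by (metis add_mono eqG_append length_append subst_append valid_H_append)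

lemma H_length_le_inv_word: "H_length_le w L \<Longrightarrow> H_length_le (inv_word w) L"
  unfolding H_length_le_def by (metis eqG_inv_word length_inv_word subst_inv_word valid_H_inv_word)

lemma H_length_le_subgen: "1 \<le> i \<Longrightarrow> i \<le> m + k \<Longrightarrow> H_length_le (subgen m i) 1"
  unfolding H_length_le_def
  by (rule exI[of _ "[(i, False)]"]) (simp add: valid_H_def subst_def subst_letter_def)

lemma H_length_le_word_pow: "H_length_le w L \<Longrightarrow> H_length_le (word_pow w p) (nat \<bar>p\<bar> * L)"
  unfolding H_length_le_def
proof (elim exE conjE)
  fix h
  assume h: "valid_H m k h" "length h \<le> L" "subst m h \<approx> w"
  then show "\<exists>h'. valid_H m k h' \<and> length h' \<le> nat \<bar>p\<bar> * L \<and> subst m h' \<approx> word_pow w p"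
    by (intro exI[of _ "word_pow h p"])
      (simp add: valid_H_word_pow length_word_pow subst_word_pow word_pow_eqG)
qed

lemma ratio_H_length_le_low:
  "1 \<le> i \<Longrightarrow> i \<le> m + 1 \<Longrightarrow> \<bar>p\<bar> \<le> int N \<Longrightarrow> H_length_le (ratio 1 i p) ((i - 1) * N)"
proof (induction i rule: nat_induct_at_least)
  case base
  then show ?case
    using H_length_le_eqG[OF H_length_le_Nil] ratio_self eqG.sym by simp
next
  case (Suc i)
  have i: "1 \<le> i" "i \<le> m"
    using Suc by auto
  have "H_length_le (word_pow (subgen m i) p) (nat \<bar>p\<bar> * 1)"
    using i by (intro H_length_le_word_pow H_length_le_subgen) auto
  then have "H_length_le (ratio i (i + 1) p) (nat \<bar>p\<bar> * 1)"
    using subgen_word_pow[OF i] by (rule H_length_le_eqG)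
  then have "H_length_le (ratio i (i + 1) p) N"
    by (rule H_length_le_mono) (use Suc.prems in \<open>simp add: nat_le_iff\<close>)
  then have "H_length_le (ratio 1 i p @ ratio i (i + 1) p) ((i - 1) * N + N)"
    using Suc by (intro H_length_le_append) auto
  then have "H_length_le (ratio 1 (Suc i) p) ((i - 1) * N + N)"
    using ratio_split[where a = 1 and b = i and c = "Suc i"]
    by (auto elim: H_length_le_eqG simp: eqG.sym)
  moreover have "(i - 1) * N + N = (Suc i - 1) * N"
    using i by (cases i) auto
  ultimately show ?case by simp
qed

lemma H_length_le_telescope:
  assumes step: "\<And>p. f p \<approx> g p @ f (p - 1)" and base: "f 0 \<approx> []"
    and bound: "\<And>p. \<bar>p\<bar> \<le> int N \<Longrightarrow> H_length_le (g p) L"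
    and p: "\<bar>p\<bar> \<le> int N"
  shows "H_length_le (f p) (nat \<bar>p\<bar> * L)"
proof -
  have f0: "H_length_le (f 0) 0"
    using H_length_le_eqG[OF H_length_le_Nil eqG.sym[OF base]] .
  have up: "H_length_le (f (int n)) (n * L)" if "n \<le> N" for n
    using that
  proof (induction n)
    case (Suc n)
    have "H_length_le (g (int (Suc n)) @ f (int n)) (L + n * L)"
      using Suc by (intro H_length_le_append bound) auto
    then show ?case
      using step[of "int (Suc n)"] by (auto elim: H_length_le_eqG simp: eqG.sym)
  qed (simp add: f0)
  have down: "H_length_le (f (- int n)) (n * L)" if "n \<le> N" for n
    using that
  proof (induction n)
    case (Suc n)
    have "H_length_le (inv_word (g (- int n)) @ f (- int n)) (L + n * L)"
      using Suc by (intro H_length_le_append H_length_le_inv_word bound) auto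
    moreover have "inv_word (g (- int n)) @ f (- int n) \<approx> f (- int n - 1)"
      using eqG_move_left[OF eqG.sym[OF step[of "- int n"]]] by (rule eqG.sym)
    ultimately have "H_length_le (f (- int n - 1)) (L + n * L)"
      by (rule H_length_le_eqG)
    moreover have "- int n - 1 = - int (Suc n)"
      by simp
    ultimately show ?case
      by (simp only:) simp
  qed (simp add: f0)
  show ?thesis
    using p up[of "nat p"] down[of "nat (- p)"] by (cases "0 \<le> p") auto
qed

lemma ratio_recursion:
  assumes j: "1 \<le> j" "j \<le> k"
  shows "ratio j (m + j + 1) p \<approx> ratio j (m + j) p @ subgen m (m + j) @ ratio j (m + j + 1) (p - 1)"
proof -
  define a b c where "a = j" and "b = m + j + 1" and "c = m + j"
  have cr: "[ginv b] @ spow a p \<approx> spow c p @ [ginv b]"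
    unfolding a_def b_def c_def using conj_rel[OF j] by (intro conj_word_pow) simp
  have s1: "[gen a] @ spow a (p - 1) \<approx> spow a p"
    using word_pow_add[of "[gen a]" 1 "p - 1"] by simp
  have s2: "[ginv b] @ spow b (- (p - 1)) \<approx> spow b (- p)"
    using word_pow_add[of "[gen b]" "- 1" "- (p - 1)"] by simp
  have "ratio a c p @ subgen m (m + j) @ ratio a b (p - 1)
      = (spow a p @ spow c (- p) @ [ginv b]) @ ([gen a] @ spow a (p - 1)) @ spow b (- (p - 1))"
    using j by (simp add: subgen_def a_def b_def c_def)
  also have "\<dots> \<approx> (spow a p @ spow c (- p)) @ ([ginv b] @ spow a p) @ spow b (- (p - 1))"
    using eqG_cong[OF s1, of "spow a p @ spow c (- p) @ [ginv b]" "spow b (- (p - 1))"] by simp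
  also have "\<dots> \<approx> (spow a p @ spow c (- p)) @ (spow c p @ [ginv b]) @ spow b (- (p - 1))"
    using cr by (rule eqG_cong)
  also have "\<dots> = spow a p @ ratio c c (- p) @ [ginv b] @ spow b (- (p - 1))"
    by simp
  also have "\<dots> \<approx> spow a p @ [] @ [ginv b] @ spow b (- (p - 1))"
    using ratio_self by (rule eqG_cong)
  also have "\<dots> \<approx> spow a p @ spow b (- p) @ []"
    using eqG_cong[OF s2, of "spow a p" "[]"] by simp
  finally show ?thesis
    by (simp add: a_def b_def c_def eqG.sym)
qed

lemma ratio_diag_H_length_le:
  assumes "j \<le> m" and q: "\<bar>q\<bar> \<le> int N"
    and X: "H_length_le (ratio 1 (m + j + 1) q) X"
  shows "H_length_le (ratio (Suc j) (m + Suc j) q) (j * N + X)"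
proof -
  have "H_length_le (inv_word (ratio 1 (Suc j) q) @ ratio 1 (m + j + 1) q) (j * N + X)"
    using assms ratio_H_length_le_low[of "Suc j" q N]
    by (intro H_length_le_append H_length_le_inv_word) auto
  then show ?thesis
    using ratio_split[where a = "Suc j" and b = 1 and c = "m + Suc j"]
    by (auto elim: H_length_le_eqG simp: eqG.sym)
qed

lemma ratio_H_length_le_step:
  assumes km: "k \<le> m" and j: "Suc j \<le> k"
    and K: "\<And>q. \<bar>q\<bar> \<le> int N \<Longrightarrow> H_length_le (ratio 1 (m + j + 1) q) (K * (N + 1) ^ (j + 1))"
    and p: "\<bar>p\<bar> \<le> int N"
  shows "H_length_le (ratio 1 (m + Suc j + 1) p) ((2 * j + K + 1) * (N + 1) ^ (Suc j + 1))"
proof -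
  define L where "L = (j + K) * (N + 1) ^ (j + 1)"
  have low: "H_length_le (ratio 1 (Suc j) q) (j * N)" if "\<bar>q\<bar> \<le> int N" for q
    using ratio_H_length_le_low[of "Suc j" q N] km j that by simp
  have W: "H_length_le (ratio (Suc j) (m + Suc j) q @ subgen m (m + Suc j)) (L + 1)"
    if q: "\<bar>q\<bar> \<le> int N" for q
  proof -
    have "H_length_le (ratio (Suc j) (m + Suc j) q) (j * N + K * (N + 1) ^ (j + 1))"
      using km j q K[OF q] by (intro ratio_diag_H_length_le) auto
    moreover have "j * N + K * (N + 1) ^ (j + 1) \<le> L"
      using mult_le_mono2[OF le_Suc_power[of N j], of j] by (simp add: L_def algebra_simps)
    ultimately have "H_length_le (ratio (Suc j) (m + Suc j) q) L"
      by (rule H_length_le_mono)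
    then show ?thesis
      using j by (intro H_length_le_append H_length_le_subgen) auto
  qed
  have "H_length_le (ratio (Suc j) (m + Suc j + 1) p) (nat \<bar>p\<bar> * (L + 1))"
    using ratio_recursion[of "Suc j"] j
    by (intro H_length_le_telescope[OF _ _ W p]) auto
  then have "H_length_le (ratio (Suc j) (m + Suc j + 1) p) (N * (L + 1))"
    by (rule H_length_le_mono) (use p in \<open>intro mult_le_mono1, simp add: nat_le_iff\<close>)
  then have "H_length_le (ratio 1 (Suc j) p @ ratio (Suc j) (m + Suc j + 1) p) (j * N + N * (L + 1))"
    using p by (intro H_length_le_append low)
  then have "H_length_le (ratio 1 (m + Suc j + 1) p) (j * N + N * (L + 1))"
    using ratio_split[where a = 1 and b = "Suc j" and c = "m + Suc j + 1"]
    by (auto elim: H_length_le_eqG simp: eqG.sym)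
  moreover have "j * N + N * (L + 1) \<le> (2 * j + K + 1) * (N + 1) ^ (Suc j + 1)"
  proof -
    have "(j + 1) * N \<le> (j + 1) * (N + 1) ^ (Suc j + 1)"
      using le_Suc_power[of N "j + 1"] by (intro mult_le_mono2) simp
    moreover have "N * L \<le> (j + K) * (N + 1) ^ (Suc j + 1)"
      using mult_le_mono1[of N "N + 1" "(j + K) * (N + 1) ^ (j + 1)"]
      by (simp add: L_def algebra_simps)
    ultimately show ?thesis
      by (simp add: algebra_simps)
  qed
  ultimately show ?thesis
    by (rule H_length_le_mono)
qed

lemma ratio_H_length_le_high:
  assumes km: "k \<le> m"
  shows "\<exists>K. \<forall>j\<le>k. \<forall>N p. \<bar>p\<bar> \<le> int N \<longrightarrow>
           H_length_le (ratio 1 (m + j + 1) p) (K * (N + 1) ^ (j + 1))"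
proof -
  have "\<exists>K. \<forall>j\<le>j0. \<forall>N p. \<bar>p\<bar> \<le> int N \<longrightarrow>
          H_length_le (ratio 1 (m + j + 1) p) (K * (N + 1) ^ (j + 1))"
    if "j0 \<le> k" for j0
    using that
  proof (induction j0)
    case 0
    have "H_length_le (ratio 1 (m + 1) p) (m * (N + 1) ^ 1)" if "\<bar>p\<bar> \<le> int N" for N p
      using ratio_H_length_le_low[of "m + 1" p N] that by (auto elim: H_length_le_mono)
    then show ?case by auto
  next
    case (Suc j)
    then obtain K where K: "\<And>j' N p. j' \<le> j \<Longrightarrow> \<bar>p\<bar> \<le> int N \<Longrightarrow>
        H_length_le (ratio 1 (m + j' + 1) p) (K * (N + 1) ^ (j' + 1))"
      by auto
    have "H_length_le (ratio 1 (m + j' + 1) p) ((2 * j + K + 1) * (N + 1) ^ (j' + 1))"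
      if "j' \<le> Suc j" "\<bar>p\<bar> \<le> int N" for j' N p
    proof (cases "j' = Suc j")
      case True
      then show ?thesis
        using ratio_H_length_le_step[OF km Suc.prems K] that by auto
    next
      case False
      have "K * (N + 1) ^ (j' + 1) \<le> (2 * j + K + 1) * (N + 1) ^ (j' + 1)"
        by (intro mult_le_mono1) simp
      then show ?thesis
        using K[of j' p N] False that by (auto elim: H_length_le_mono)
    qed
    then show ?case by blast
  qed
  from this[of k] show ?thesis by simp
qed

lemma conj_s1_Nil: "conj_s1 p [] \<approx> []"
  using ratio_self[of 1 p] by simp

lemma conj_s1_append: "conj_s1 p (u @ v) \<approx> conj_s1 p u @ conj_s1 p v"
  using eqG_insert_inverse[of "spow 1 p @ u" "v @ spow 1 (- p)" "spow 1 (- p)"] by simp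

lemma conj_s1_subgen_low:
  assumes i: "1 \<le> i" "i \<le> m"
  shows "conj_s1 p (subgen m i) \<approx> ratio 1 i p @ subgen m i @ inv_word (ratio 1 i p)"
proof -
  have "subgen m i @ [gen i] \<approx> [gen i] @ subgen m i"
    using eqG_append_right[OF commute_rel_inv[OF i], of "[gen i]"] i
    by (simp add: subgen_def eqG.sym)
  then have c: "spow i (- p) @ subgen m i \<approx> subgen m i @ spow i (- p)"
    using conj_word_pow eqG.sym by blast
  have "ratio 1 i p @ subgen m i @ inv_word (ratio 1 i p)
      = spow 1 p @ (spow i (- p) @ subgen m i) @ spow i p @ spow 1 (- p)"
    by simp
  also have "\<dots> \<approx> spow 1 p @ (subgen m i @ spow i (- p)) @ spow i p @ spow 1 (- p)"
    using c by (rule eqG_cong)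
  also have "\<dots> = (spow 1 p @ subgen m i) @ ratio i i (- p) @ spow 1 (- p)"
    by simp
  also have "\<dots> \<approx> (spow 1 p @ subgen m i) @ [] @ spow 1 (- p)"
    using ratio_self by (rule eqG_cong)
  finally show ?thesis
    by (simp add: eqG.sym)
qed

lemma conj_s1_subgen_high:
  assumes j: "1 \<le> j" "j \<le> k"
  shows "conj_s1 p (subgen m (m + j)) \<approx> ratio 1 (m + j) p @ subgen m (m + j) @ inv_word (ratio 1 j p)"
proof -
  define a b c where "a = j" and "b = m + j + 1" and "c = m + j"
  have cr: "[ginv b] @ spow a (- p) \<approx> spow c (- p) @ [ginv b]"
    unfolding a_def b_def c_def using conj_rel[OF j] by (intro conj_word_pow) simp
  have s: "spow a (- p) @ [gen a] @ spow a p \<approx> [gen a]"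
  proof -
    have "spow a (- p) @ [gen a] @ spow a p \<approx> spow a (- p + 1) @ spow a p"
      using eqG_append_right[OF word_pow_add[of "[gen a]" "- p" 1]] by simp
    also have "\<dots> \<approx> [gen a]"
      using word_pow_add[of "[gen a]" "- p + 1" p] by simp
    finally show ?thesis .
  qed
  have "ratio 1 c p @ subgen m (m + j) @ inv_word (ratio 1 a p)
      = spow 1 p @ (spow c (- p) @ [ginv b]) @ [gen a] @ spow a p @ spow 1 (- p)"
    using j by (simp add: subgen_def a_def b_def c_def)
  also have "\<dots> \<approx> spow 1 p @ ([ginv b] @ spow a (- p)) @ [gen a] @ spow a p @ spow 1 (- p)"
    using eqG.sym[OF cr] by (rule eqG_cong)
  also have "\<dots> = (spow 1 p @ [ginv b]) @ (spow a (- p) @ [gen a] @ spow a p) @ spow 1 (- p)"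
    by simp
  also have "\<dots> \<approx> (spow 1 p @ [ginv b]) @ [gen a] @ spow 1 (- p)"
    using s by (rule eqG_cong)
  finally show ?thesis
    using j by (simp add: subgen_def a_def b_def c_def eqG.sym)
qed

lemma conj_s1_subgen_low_H_length_le:
  assumes i: "1 \<le> i" "i \<le> m" and p: "\<bar>p\<bar> \<le> int N"
  shows "H_length_le (conj_s1 p (subgen m i)) ((i - 1) * N + (1 + (i - 1) * N))"
proof -
  have "H_length_le (ratio 1 i p @ subgen m i @ inv_word (ratio 1 i p))
      ((i - 1) * N + (1 + (i - 1) * N))"
    using i p by (intro H_length_le_append H_length_le_inv_word H_length_le_subgen
        ratio_H_length_le_low) auto
  then show ?thesis
    using conj_s1_subgen_low[OF i] by (auto elim: H_length_le_eqG simp: eqG.sym)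
qed

lemma conj_s1_subgen_high_H_length_le:
  assumes km: "k \<le> m" and j: "1 \<le> j" "j \<le> k" and p: "\<bar>p\<bar> \<le> int N"
    and X: "H_length_le (ratio 1 (m + j) p) X"
  shows "H_length_le (conj_s1 p (subgen m (m + j))) (X + (1 + (j - 1) * N))"
proof -
  have "H_length_le (ratio 1 (m + j) p @ subgen m (m + j) @ inv_word (ratio 1 j p))
      (X + (1 + (j - 1) * N))"
    using km j p X by (intro H_length_le_append H_length_le_inv_word H_length_le_subgen
        ratio_H_length_le_low) auto
  then show ?thesis
    using conj_s1_subgen_high[OF j] by (auto elim: H_length_le_eqG simp: eqG.sym)
qed

text \<open>This is where \<open>m \<le> k + 1\<close> is needed: conjugating \<open>A\<^sub>i\<close> by \<open>s\<^sub>1\<^sup>p\<close> costs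
  about \<open>2 (i - 1) \<bar>p\<bar>\<close> generators, which has to be \<open>O(\<bar>p\<bar>\<^sup>k)\<close>.\<close>

lemma conj_s1_subgen_H_length_le:
  assumes km: "k \<le> m" and mk: "m \<le> k + 1"
  shows "\<exists>C. \<forall>i N p. 1 \<le> i \<and> i \<le> m + k \<and> \<bar>p\<bar> \<le> int N \<longrightarrow>
           H_length_le (conj_s1 p (subgen m i)) (C * (N + 1) ^ k)"
proof -
  obtain K where K: "\<And>j N p. j \<le> k \<Longrightarrow> \<bar>p\<bar> \<le> int N \<Longrightarrow>
      H_length_le (ratio 1 (m + j + 1) p) (K * (N + 1) ^ (j + 1))"
    using ratio_H_length_le_high[OF km] by blast
  have bound: "a + (1 + b) \<le> (K + 2 * k + 1) * X"
    if "a \<le> K * X + k * X" "b \<le> k * X" "1 \<le> X" for a b X :: nat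
    using that by (simp add: algebra_simps)
  have "H_length_le (conj_s1 p (subgen m i)) ((K + 2 * k + 1) * (N + 1) ^ k)"
    if i: "1 \<le> i" "i \<le> m + k" and p: "\<bar>p\<bar> \<le> int N" for i N p
  proof (cases "i \<le> m")
    case True
    have "(i - 1) * N \<le> k * (N + 1) ^ k"
      using mk True by (intro mult_le_mult_Suc_power) simp
    with conj_s1_subgen_low_H_length_le[OF i(1) True p] show ?thesis
      by (elim H_length_le_mono) (rule bound; simp)
  next
    case False
    define j where "j = i - m"
    have j: "1 \<le> j" "j \<le> k" "i = m + j"
      using False i by (auto simp: j_def)
    have "H_length_le (ratio 1 (m + (j - 1) + 1) p) (K * (N + 1) ^ (j - 1 + 1))"
      using j p by (intro K) auto
    moreover have "m + (j - 1) + 1 = m + j" "j - 1 + 1 = j"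
      using j by auto
    ultimately have "H_length_le (ratio 1 (m + j) p) (K * (N + 1) ^ j)"
      by simp
    moreover have "K * (N + 1) ^ j \<le> K * (N + 1) ^ k"
      using j by (intro mult_le_mono2 power_increasing) auto
    ultimately have "H_length_le (ratio 1 (m + j) p) (K * (N + 1) ^ k)"
      by (rule H_length_le_mono)
    then have "H_length_le (conj_s1 p (subgen m i)) (K * (N + 1) ^ k + (1 + (j - 1) * N))"
      unfolding j(3) by (rule conj_s1_subgen_high_H_length_le[OF km j(1,2) p])
    moreover have "(j - 1) * N \<le> k * (N + 1) ^ k"
      using j by (intro mult_le_mult_Suc_power) simp
    ultimately show ?thesis
      by (elim H_length_le_mono) (rule bound; simp)
  qed
  then show ?thesis by blast
qed

lemma conj_s1_H_length_le_of_subgen: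
  assumes gens: "\<And>i. 1 \<le> i \<Longrightarrow> i \<le> m + k \<Longrightarrow> H_length_le (conj_s1 p (subgen m i)) B"
    and w: "H_length_le w L"
  shows "H_length_le (conj_s1 p w) (L * B)"
proof -
  have letter: "H_length_le (conj_s1 p (subst_letter m x)) B" if "valid_H m k [x]" for x
  proof -
    have i: "1 \<le> fst x" "fst x \<le> m + k"
      using that by (auto simp: valid_H_def)
    then show ?thesis
      using gens[OF i] H_length_le_inv_word[OF gens[OF i]] by (simp add: subst_letter_def)
  qed
  have word: "H_length_le (conj_s1 p (subst m h)) (length h * B)" if "valid_H m k h" for h
    using that
  proof (induction h)
    case Nil
    then show ?case
      using H_length_le_eqG[OF H_length_le_Nil eqG.sym[OF conj_s1_Nil]] by simp
  next
    case (Cons x h)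
    have "H_length_le (conj_s1 p (subst_letter m x) @ conj_s1 p (subst m h)) (B + length h * B)"
      using Cons by (intro H_length_le_append letter) (auto simp: valid_H_Cons[of m k x h])
    then show ?case
      using conj_s1_append[of p "subst_letter m x" "subst m h"]
      by (auto elim: H_length_le_eqG simp: subst_Cons eqG.sym)
  qed
  obtain h where h: "valid_H m k h" "length h \<le> L" "subst m h \<approx> w"
    using w by (auto simp: H_length_le_def)
  have "H_length_le (conj_s1 p w) (length h * B)"
    using word[OF h(1)] eqG_cong[OF h(3)] by (rule H_length_le_eqG)
  then show ?thesis
    by (rule H_length_le_mono) (simp add: h(2))
qed

lemma ratio_s1_H_length_le:
  assumes km: "k \<le> m"
  shows "\<exists>c. \<forall>i. 1 \<le> i \<and> i \<le> m + k + 1 \<longrightarrow> H_length_le (ratio 1 i (- 1)) c"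
proof -
  obtain K where K: "\<And>j N p. j \<le> k \<Longrightarrow> \<bar>p\<bar> \<le> int N \<Longrightarrow>
      H_length_le (ratio 1 (m + j + 1) p) (K * (N + 1) ^ (j + 1))"
    using ratio_H_length_le_high[OF km] by blast
  have "H_length_le (ratio 1 i (- 1)) (m + K * 2 ^ (k + 1))"
    if i: "1 \<le> i" "i \<le> m + k + 1" for i
  proof (cases "i \<le> m + 1")
    case True
    then show ?thesis
      using ratio_H_length_le_low[of i "- 1" 1] i by (auto elim: H_length_le_mono)
  next
    case False
    define j where "j = i - m - 1"
    have j: "j \<le> k" "i = m + j + 1"
      using False i by (auto simp: j_def)
    have "K * 2 ^ (j + 1) \<le> K * 2 ^ (k + 1)"
      using j by (intro mult_le_mono2 power_increasing) auto
    then have "K * 2 ^ (j + 1) \<le> m + K * 2 ^ (k + 1)"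
      by linarith
    have "H_length_le (ratio 1 (m + j + 1) (- 1)) (K * 2 ^ (j + 1))"
      using K[of j "- 1" 1, unfolded one_add_one] j by simp
    then show ?thesis
      unfolding j(2) by (rule H_length_le_mono) fact
  qed
  then show ?thesis by blast
qed

lemma spow_gen_shift: "spow 1 p @ [gen i] \<approx> conj_s1 (p + 1) (ratio 1 i (- 1)) @ spow 1 (p + 1)"
proof -
  have "conj_s1 (p + 1) (ratio 1 i (- 1)) @ spow 1 (p + 1)
      = (spow 1 (p + 1) @ [ginv 1, gen i]) @ (spow 1 (- (p + 1)) @ spow 1 (p + 1)) @ []"
    by simp
  also have "\<dots> \<approx> (spow 1 (p + 1) @ [ginv 1, gen i]) @ [] @ []"
    using word_pow_add[of "[gen 1]" "- (p + 1)" "p + 1"] by (intro eqG_cong) simp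
  also have "\<dots> \<approx> spow 1 p @ [gen i]"
    using eqG_append_right[OF word_pow_add[of "[gen 1]" "p + 1" "- 1"], of "[gen i]"] by simp
  finally show ?thesis
    by (rule eqG.sym)
qed

lemma spow_ginv_shift:
  "spow 1 p @ [ginv i] \<approx> conj_s1 p (inv_word (ratio 1 i (- 1))) @ spow 1 (p - 1)"
proof -
  have "conj_s1 p (inv_word (ratio 1 i (- 1))) @ spow 1 (p - 1)
      = (spow 1 p @ [ginv i, gen 1]) @ (spow 1 (- p) @ spow 1 (p - 1)) @ []"
    by simp
  also have "\<dots> \<approx> (spow 1 p @ [ginv i, gen 1]) @ [ginv 1] @ []"
    using word_pow_add[of "[gen 1]" "- p" "p - 1"] by (intro eqG_cong) simp
  also have "\<dots> = (spow 1 p @ [ginv i]) @ [gen 1, inv_letter (gen 1)] @ []"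
    by simp
  also have "\<dots> \<approx> (spow 1 p @ [ginv i]) @ [] @ []"
    by (rule eqG_cong[OF eqG_cancel_pair])
  finally show ?thesis
    by (simp add: eqG.sym)
qed

lemma letter_shift_H_length_le:
  assumes km: "k \<le> m" and mk: "m \<le> k + 1"
  shows "\<exists>c. \<forall>N p x. valid_G m k [x] \<and> \<bar>p\<bar> + 1 \<le> int N \<longrightarrow>
           (\<exists>w. H_length_le w (c * (N + 1) ^ k) \<and> spow 1 p @ [x] \<approx> w @ spow 1 (p + exp_sum [x]))"
proof -
  obtain C where C: "\<And>i N p. 1 \<le> i \<Longrightarrow> i \<le> m + k \<Longrightarrow> \<bar>p\<bar> \<le> int N \<Longrightarrow>
      H_length_le (conj_s1 p (subgen m i)) (C * (N + 1) ^ k)"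
    using conj_s1_subgen_H_length_le[OF km mk] by blast
  obtain c where c: "\<And>i. 1 \<le> i \<Longrightarrow> i \<le> m + k + 1 \<Longrightarrow> H_length_le (ratio 1 i (- 1)) c"
    using ratio_s1_H_length_le[OF km] by blast
  have "\<exists>w. H_length_le w (c * C * (N + 1) ^ k) \<and> spow 1 p @ [x] \<approx> w @ spow 1 (p + exp_sum [x])"
    if x: "valid_G m k [x]" and p: "\<bar>p\<bar> + 1 \<le> int N" for N p x
  proof -
    obtain i b where xib: "x = (i, b)"
      by fastforce
    have i: "1 \<le> i" "i \<le> m + k + 1"
      using x xib by (auto simp: valid_G_def)
    show ?thesis
    proof (cases b)
      case False
      then have "x = gen i"
        using xib by (simp add: gen_def)
      moreover have "H_length_le (conj_s1 (p + 1) (ratio 1 i (- 1))) (c * (C * (N + 1) ^ k))"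
        using p by (intro conj_s1_H_length_le_of_subgen C c i) auto
      ultimately show ?thesis
        using spow_gen_shift by (auto simp: mult.assoc)
    next
      case True
      then have "x = ginv i"
        using xib by (simp add: ginv_def)
      moreover have "H_length_le (conj_s1 p (inv_word (ratio 1 i (- 1)))) (c * (C * (N + 1) ^ k))"
        using p by (intro conj_s1_H_length_le_of_subgen C H_length_le_inv_word c i) auto
      ultimately show ?thesis
        using spow_ginv_shift by (auto simp: mult.assoc)
    qed
  qed
  then show ?thesis by blast
qed

lemma word_shift:
  assumes letter: "\<And>x p. valid_G m k [x] \<Longrightarrow> \<bar>p\<bar> + 1 \<le> int N \<Longrightarrow>
      \<exists>w. H_length_le w B \<and> spow 1 p @ [x] \<approx> w @ spow 1 (p + exp_sum [x])"
  shows "valid_G m k u \<Longrightarrow> \<bar>p\<bar> + int (length u) \<le> int N \<Longrightarrow>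
      \<exists>w. H_length_le w (length u * B) \<and> spow 1 p @ u \<approx> w @ spow 1 (p + exp_sum u)"
proof (induction u arbitrary: p)
  case Nil
  show ?case
    using H_length_le_Nil by auto
next
  case (Cons x u)
  have x: "valid_G m k [x]" and u: "valid_G m k u"
    using Cons.prems(1) by (auto simp: valid_G_def)
  have "\<bar>p\<bar> + 1 \<le> int N"
    using Cons.prems(2) by simp
  then obtain w1 where w1: "H_length_le w1 B" "spow 1 p @ [x] \<approx> w1 @ spow 1 (p + exp_sum [x])"
    using letter[OF x] by blast
  have "\<bar>p + exp_sum [x]\<bar> + int (length u) \<le> int N"
    using Cons.prems(2) by (auto simp: exp_sum_Cons)
  then obtain w2 where w2: "H_length_le w2 (length u * B)"
      "spow 1 (p + exp_sum [x]) @ u \<approx> w2 @ spow 1 (p + exp_sum [x] + exp_sum u)"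
    using Cons.IH[OF u] by blast
  have "spow 1 p @ x # u = (spow 1 p @ [x]) @ u"
    by simp
  also have "\<dots> \<approx> w1 @ spow 1 (p + exp_sum [x]) @ u"
    using eqG_append_right[OF w1(2)] by simp
  also have "\<dots> \<approx> w1 @ w2 @ spow 1 (p + exp_sum [x] + exp_sum u)"
    using w2(2) by (rule eqG_append_left)
  also have "p + exp_sum [x] + exp_sum u = p + exp_sum (x # u)"
    using exp_sum_append[of "[x]" u] by simp
  finally have "spow 1 p @ x # u \<approx> (w1 @ w2) @ spow 1 (p + exp_sum (x # u))"
    by simp
  moreover have "H_length_le (w1 @ w2) (length (x # u) * B)"
    using H_length_le_append[OF w1(1) w2(1)] by simp
  ultimately show ?case by blast
qed

lemma H_length_le_exp_sum_zero:
  assumes km: "k \<le> m" and mk: "m \<le> k + 1"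
  shows "\<exists>c. \<forall>u. valid_G m k u \<and> exp_sum u = 0 \<longrightarrow> H_length_le u (c * (length u + 1) ^ (k + 1))"
proof -
  obtain c where c: "\<And>N p x. valid_G m k [x] \<Longrightarrow> \<bar>p\<bar> + 1 \<le> int N \<Longrightarrow>
      \<exists>w. H_length_le w (c * (N + 1) ^ k) \<and> spow 1 p @ [x] \<approx> w @ spow 1 (p + exp_sum [x])"
    using letter_shift_H_length_le[OF km mk] by blast
  have "H_length_le u (c * (length u + 1) ^ (k + 1))"
    if u: "valid_G m k u" "exp_sum u = 0" for u
  proof -
    have letter: "\<And>x p. valid_G m k [x] \<Longrightarrow> \<bar>p\<bar> + 1 \<le> int (length u) \<Longrightarrow>
        \<exists>w. H_length_le w (c * (length u + 1) ^ k) \<and> spow 1 p @ [x] \<approx> w @ spow 1 (p + exp_sum [x])"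
      by (rule c)
    obtain w where w: "H_length_le w (length u * (c * (length u + 1) ^ k))" "u \<approx> w"
      using word_shift[where N = "length u" and B = "c * (length u + 1) ^ k", OF letter u(1), of 0] u(2) by auto
    have "H_length_le u (length u * (c * (length u + 1) ^ k))"
      using w(1) eqG.sym[OF w(2)] by (rule H_length_le_eqG)
    then show ?thesis
      by (rule H_length_le_mono) (simp add: algebra_simps)
  qed
  then show ?thesis by blast
qed

end

lemma exp_sum_eqG: "eqG m k u v \<Longrightarrow> exp_sum u = exp_sum v"
proof (induction rule: eqG.induct)
  case (cancel u x v)
  then show ?case by (simp add: exp_sum_Cons inv_letter_def)
next
  case (rel r u v)
  then have "exp_sum r = 0"
    by (auto simp: relators_def exp_sum_Cons gen_def ginv_def)
  then show ?case by simp
qed simp_all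

lemma exp_sum_eq_0_if_inH: "inH m k w \<Longrightarrow> exp_sum w = 0"
  unfolding inH_def using exp_sum_eqG by force

lemma dG_le_length: "valid_G m k w \<Longrightarrow> dG m k w \<le> length w"
  unfolding dG_def by (rule Least_le) (blast intro: eqG.refl)

lemma dG_witness: "valid_G m k w \<Longrightarrow> \<exists>u. valid_G m k u \<and> length u = dG m k w \<and> eqG m k u w"
  unfolding dG_def by (rule LeastI_ex) (blast intro: eqG.refl)

lemma dH_le_if_H_length_le: "H_length_le m k w L \<Longrightarrow> dH m k w \<le> L"
  unfolding H_length_le_def dH_def by (blast intro: Least_le le_trans)

lemma inH_if_H_length_le: "H_length_le m k w L \<Longrightarrow> inH m k w"
  unfolding H_length_le_def inH_def by blast

lemma dH_witness: "inH m k w \<Longrightarrow> \<exists>h. valid_H m k h \<and> length h = dH m k w \<and> eqG m k (subst m h) w"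
  unfolding inH_def dH_def by (rule LeastI_ex) blast

section \<open>A representation into \<open>\<int> \<ltimes> \<real>\<^sup>\<int>\<close>: lower bound\<close>

type_synonym sdp = "int \<times> (int \<Rightarrow> real)"

definition sdp_mult :: "sdp \<Rightarrow> sdp \<Rightarrow> sdp" where
  "sdp_mult a b = (fst a + fst b, \<lambda>y. snd a y + snd b (y + fst a))"

definition sdp_one :: sdp where
  "sdp_one = (0, \<lambda>_. 0)"

lemma sdp_mult_one [simp]: "sdp_mult sdp_one a = a" "sdp_mult a sdp_one = a"
  by (simp_all add: sdp_mult_def sdp_one_def)

lemma sdp_mult_assoc: "sdp_mult (sdp_mult a b) c = sdp_mult a (sdp_mult b c)"
  by (simp add: sdp_mult_def algebra_simps)

text \<open>\<open>weight m (m + j) y = (y + j - 2 choose j - 1)\<close>, so that the relator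
  \<open>s\<^sub>m\<^sub>+\<^sub>j\<^sub>+\<^sub>1\<^sup>-\<^sup>1 s\<^sub>j s\<^sub>m\<^sub>+\<^sub>j\<^sub>+\<^sub>1 = s\<^sub>m\<^sub>+\<^sub>j\<close> becomes Pascal's rule.\<close>

definition weight :: "nat \<Rightarrow> nat \<Rightarrow> int \<Rightarrow> real" where
  "weight m i y = (if m < i then (of_int y + of_nat (i - m - 1) - 1) gchoose (i - m - 1) else 0)"

definition rep_letter :: "nat \<Rightarrow> letter \<Rightarrow> sdp" where
  "rep_letter m x =
     (if snd x then (- 1, \<lambda>y. - weight m (fst x) (y - 1)) else (1, weight m (fst x)))"

fun rep :: "nat \<Rightarrow> letter list \<Rightarrow> sdp" where
  "rep m [] = sdp_one"
| "rep m (x # w) = sdp_mult (rep_letter m x) (rep m w)"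

lemma rep_append: "rep m (u @ v) = sdp_mult (rep m u) (rep m v)"
  by (induction u) (simp_all add: sdp_mult_assoc)

lemma rep_letter_gen [simp]:
  "rep_letter m (gen i) = (1, weight m i)"
  "rep_letter m (ginv i) = (- 1, \<lambda>y. - weight m i (y - 1))"
  by (simp_all add: rep_letter_def gen_def ginv_def)

lemma weight_low: "i \<le> m \<Longrightarrow> weight m i y = 0"
  by (simp add: weight_def)

lemma weight_Pascal: "1 \<le> j \<Longrightarrow> weight m (m + j + 1) y - weight m (m + j + 1) (y - 1) = weight m (m + j) y"
proof -
  assume "1 \<le> j"
  then obtain n where n: "j = Suc n"
    by (cases j) auto
  define z :: real where "z = of_int y + of_nat n - 1"
  have "weight m (m + j + 1) y = (z + 1) gchoose Suc n"
    "weight m (m + j + 1) (y - 1) = z gchoose Suc n"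
    "weight m (m + j) y = z gchoose n"
    by (simp_all add: weight_def n z_def algebra_simps)
  then show ?thesis
    by (simp add: gbinomial_Suc_Suc)
qed

lemma rep_relator: "k \<le> m \<Longrightarrow> r \<in> relators m k \<Longrightarrow> rep m r = sdp_one"
proof -
  assume km: "k \<le> m" and r: "r \<in> relators m k"
  then consider (comm) i where "r = [ginv i, ginv (i + 1), gen i, gen (i + 1)]" "1 \<le> i" "i \<le> m"
    | (conj) j where "r = [ginv (m + j + 1), gen j, gen (m + j + 1), ginv (m + j)]" "1 \<le> j" "j \<le> k"
    by (auto simp: relators_def)
  then show ?thesis
  proof cases
    case comm
    define c where "c = weight m (Suc i) 0"
    have "weight m (Suc i) y = c" for y
      using comm by (simp add: weight_def c_def)
    then show ?thesis
      using comm by (simp add: sdp_mult_def sdp_one_def weight_low)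
  next
    case conj
    have "weight m (m + j + 1) y - weight m (m + j) y - weight m (m + j + 1) (y - 1) = 0" for y
      using weight_Pascal[of j m y] conj by simp
    then show ?thesis
      using conj km by (simp add: sdp_mult_def sdp_one_def weight_low)
  qed
qed

lemma rep_eqG:
  assumes "k \<le> m"
  shows "eqG m k u v \<Longrightarrow> rep m u = rep m v"
proof (induction rule: eqG.induct)
  case (cancel u x v)
  have "rep m [x, inv_letter x] = sdp_one"
    by (cases x) (auto simp: rep_letter_def inv_letter_def sdp_mult_def sdp_one_def)
  moreover have "rep m (u @ [x, inv_letter x] @ v)
      = sdp_mult (rep m u) (sdp_mult (rep m [x, inv_letter x]) (rep m v))"
    by (simp only: rep_append)
  ultimately show ?case
    by (simp add: rep_append del: rep.simps)
next
  case (rel r u v)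
  then show ?case
    using rep_relator[OF assms] by (simp add: rep_append del: rep.simps)
qed simp_all

lemma weight_at_0: "\<bar>weight m i 0\<bar> \<le> 1"
proof (cases "m < i")
  case True
  define n where "n = i - m - 1"
  have w: "weight m i 0 = (of_nat n - 1) gchoose n"
    using True by (simp add: weight_def n_def)
  show ?thesis
  proof (cases n)
    case (Suc n')
    have "weight m i 0 = of_nat (n' choose n)"
      using w Suc by (simp add: binomial_gbinomial)
    then show ?thesis
      using Suc by (simp add: binomial_eq_0)
  qed (simp add: w)
qed (simp add: weight_def)

lemma rep_subst:
  assumes km: "k \<le> m" and h: "valid_H m k h"
  shows "fst (rep m (subst m h)) = 0 \<and> \<bar>snd (rep m (subst m h)) 1\<bar> \<le> real (length h)"
  using h
proof (induction h)
  case Nil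
  then show ?case by (simp add: sdp_one_def)
next
  case (Cons x h)
  have "1 \<le> fst x" "fst x \<le> m + k"
    using Cons.prems by (auto simp: valid_H_def)
  then have low: "weight m (if fst x \<le> m then fst x else fst x - m) y = 0" for y
    using km by (intro weight_low) auto
  have "fst (rep m (subst_letter m x)) = 0 \<and> \<bar>snd (rep m (subst_letter m x)) 1\<bar> \<le> 1"
    using weight_at_0[of m "fst x + 1"] low
    by (auto simp: subst_letter_def subgen_def sdp_mult_def sdp_one_def)
  moreover have "fst (rep m (subst m h)) = 0 \<and> \<bar>snd (rep m (subst m h)) 1\<bar> \<le> real (length h)"
    using Cons by (simp add: valid_H_Cons[of m k x h])
  moreover have "rep m (subst m (x # h)) = sdp_mult (rep m (subst_letter m x)) (rep m (subst m h))"
    by (simp add: subst_Cons rep_append del: rep.simps)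
  ultimately show ?case
    using abs_triangle_ineq[of "snd (rep m (subst_letter m x)) 1" "snd (rep m (subst m h)) 1"]
    by (simp add: sdp_mult_def)
qed

lemma rep_value_le_dH:
  assumes km: "k \<le> m" and w: "inH m k w"
  shows "\<bar>snd (rep m w) 1\<bar> \<le> real (dH m k w)"
proof -
  obtain h where h: "valid_H m k h" "length h = dH m k w" "eqG m k (subst m h) w"
    using dH_witness[OF w] by blast
  then show ?thesis
    using rep_subst[OF km h(1)] rep_eqG[OF km h(3)] by simp
qed

lemma rep_replicate_gen:
  "rep m (replicate N (gen i)) = (int N, \<lambda>y. \<Sum>l<N. weight m i (y + int l))"
proof (induction N)
  case (Suc N)
  have "weight m i y + (\<Sum>l<N. weight m i (y + 1 + int l)) = (\<Sum>l<Suc N. weight m i (y + int l))" for y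
    by (subst sum.lessThan_Suc_shift) (simp add: algebra_simps)
  then show ?case
    using Suc by (simp add: sdp_mult_def algebra_simps)
qed (simp add: sdp_one_def)

lemma rep_replicate_ginv_low: "i \<le> m \<Longrightarrow> rep m (replicate N (ginv i)) = (- int N, \<lambda>y. 0)"
  by (induction N) (simp_all add: sdp_mult_def sdp_one_def weight_low)

lemma rep_value_witness:
  assumes "1 \<le> m"
  shows "snd (rep m (replicate N (gen (m + k + 1)) @ replicate N (ginv 1))) 1
           = real ((N + k) choose (k + 1))"
proof -
  have "snd (rep m (replicate N (gen (m + k + 1)) @ replicate N (ginv 1))) 1
      = (\<Sum>l<N. weight m (m + k + 1) (1 + int l))"
    using assms by (simp add: rep_append rep_replicate_gen rep_replicate_ginv_low sdp_mult_def del: rep.simps)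
  also have "\<dots> = (\<Sum>l<N. real ((l + k) choose k))"
    by (intro sum.cong) (simp_all add: weight_def binomial_gbinomial)
  also have "\<dots> = real ((N + k) choose (k + 1))"
  proof -
    have "(\<Sum>l<N. (l + k) choose k) = (N + k) choose (k + 1)"
      by (induction N) simp_all
    then show ?thesis
      by (simp flip: of_nat_sum)
  qed
  finally show ?thesis .
qed

lemma power_le_binomial: "n ^ (k + 1) \<le> ((k + 1) * n + k) choose (k + 1)"
proof (cases "n = 0")
  case False
  have "real ((k + 1) * n) / real (k + 1) = real n"
    by (simp add: field_simps)
  then have "real n ^ (k + 1) = (real ((k + 1) * n) / real (k + 1)) ^ (k + 1)"
    by simp
  also have "\<dots> \<le> (real ((k + 1) * n + k) / real (k + 1)) ^ (k + 1)"
    by (intro power_mono divide_right_mono) auto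
  also have "\<dots> \<le> real (((k + 1) * n + k) choose (k + 1))"
    using False by (intro binomial_ge_n_over_k_pow_k) (cases n; simp)
  finally show ?thesis
    by (simp only: of_nat_power[symmetric] of_nat_le_iff)
qed simp

lemma distortion_le:
  assumes bound: "\<And>w. valid_G m k w \<Longrightarrow> inH m k w \<Longrightarrow> dH m k w \<le> f (dG m k w)"
    and "mono f"
  shows "distortion m k n \<le> f n"
proof -
  define X where "X = {dH m k w | w. valid_G m k w \<and> inH m k w \<and> dG m k w \<le> n}"
  have "d \<le> f n" if "d \<in> X" for d
    using that bound monoD[OF \<open>mono f\<close>] unfolding X_def by (blast intro: le_trans)
  then have "Sup X \<le> f n"
    by (cases "X = {}") (auto intro: cSup_least)
  then show ?thesis
    by (simp add: distortion_def X_def)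
qed

lemma le_distortion:
  assumes bound: "\<And>w. valid_G m k w \<Longrightarrow> inH m k w \<Longrightarrow> dH m k w \<le> f (dG m k w)"
    and "mono f" and w: "valid_G m k w" "inH m k w" "dG m k w \<le> n"
  shows "dH m k w \<le> distortion m k n"
proof -
  have "bdd_above {dH m k w | w. valid_G m k w \<and> inH m k w \<and> dG m k w \<le> n}"
    using bound monoD[OF \<open>mono f\<close>] by (intro bdd_aboveI[of _ "f n"]) (blast intro: le_trans)
  then show ?thesis
    unfolding distortion_def using w by (intro cSup_upper) auto
qed

lemma preceq_power_if_le:
  assumes "\<And>n. f n \<le> c * (n + 1) ^ d"
  shows "f \<preceq>\<^sub>d (\<lambda>n. n ^ d)"
  unfolding preceq_def
proof (intro exI[of _ "c + 1"] conjI allI)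
  fix n
  have "f n \<le> c * (n + 1) ^ d"
    by (rule assms)
  also have "\<dots> \<le> (c + 1) * ((c + 1) * n + (c + 1)) ^ d"
    by (intro mult_le_mono power_mono) (simp_all add: algebra_simps)
  finally show "f n \<le> (c + 1) * ((c + 1) * n + (c + 1)) ^ d + (c + 1) * n + (c + 1)"
    by simp
qed simp

lemma power_preceq_if_le:
  assumes "0 < C" and "\<And>n. n ^ d \<le> f (C * n + C)"
  shows "(\<lambda>n. n ^ d) \<preceq>\<^sub>d f"
  unfolding preceq_def
proof (intro exI[of _ C] conjI allI)
  fix n
  have "f (C * n + C) \<le> C * f (C * n + C)"
    using assms(1) by simp
  then have "n ^ d \<le> C * f (C * n + C)"
    using assms(2)[of n] by (rule le_trans[rotated])
  then show "n ^ d \<le> C * f (C * n + C) + C * n + C"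
    by simp
qed (rule assms(1))

lemma dH_le_power_dG:
  assumes km: "k \<le> m" and mk: "m \<le> k + 1"
  shows "\<exists>c. \<forall>w. valid_G m k w \<and> inH m k w \<longrightarrow> dH m k w \<le> c * (dG m k w + 1) ^ (k + 1)"
proof -
  obtain c where c: "\<And>u. valid_G m k u \<Longrightarrow> exp_sum u = 0 \<Longrightarrow>
      H_length_le m k u (c * (length u + 1) ^ (k + 1))"
    using H_length_le_exp_sum_zero[OF km mk] by blast
  have "dH m k w \<le> c * (dG m k w + 1) ^ (k + 1)" if w: "valid_G m k w" "inH m k w" for w
  proof -
    obtain u where u: "valid_G m k u" "length u = dG m k w" "eqG m k u w"
      using dG_witness[OF w(1)] by blast
    have "exp_sum u = 0"
      using exp_sum_eqG[OF u(3)] exp_sum_eq_0_if_inH[OF w(2)] by simp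
    then have "H_length_le m k w (c * (length u + 1) ^ (k + 1))"
      using H_length_le_eqG[OF c[OF u(1)] u(3)] by simp
    then show ?thesis
      using u(2) dH_le_if_H_length_le by simp
  qed
  then show ?thesis by blast
qed

lemma power_le_distortion:
  assumes m: "1 \<le> m" and km: "k \<le> m" and mk: "m \<le> k + 1"
  shows "n ^ (k + 1) \<le> distortion m k (2 * (k + 1) * n + 2 * (k + 1))"
proof -
  obtain c where c: "\<And>w. valid_G m k w \<Longrightarrow> inH m k w \<Longrightarrow> dH m k w \<le> c * (dG m k w + 1) ^ (k + 1)"
    using dH_le_power_dG[OF km mk] by blast
  obtain c' where c': "\<And>u. valid_G m k u \<Longrightarrow> exp_sum u = 0 \<Longrightarrow>
      H_length_le m k u (c' * (length u + 1) ^ (k + 1))"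
    using H_length_le_exp_sum_zero[OF km mk] by blast
  have mono: "mono (\<lambda>n. c * (n + 1) ^ (k + 1))"
    by (intro monoI mult_le_mono2 power_mono) simp_all
  define N where "N = (k + 1) * n"
  define w where "w = replicate N (gen (m + k + 1)) @ replicate N (ginv 1)"
  have w: "valid_G m k w" "exp_sum w = 0"
    using m by (auto simp: w_def valid_G_def gen_def ginv_def exp_sum_replicate exp_sum_Cons)
  then have iw: "inH m k w"
    using c' inH_if_H_length_le by blast
  have "n ^ (k + 1) \<le> (N + k) choose (k + 1)"
    unfolding N_def by (rule power_le_binomial)
  also have "\<dots> \<le> dH m k w"
    using rep_value_le_dH[OF km iw] rep_value_witness[OF m] by (simp add: w_def)
  also have "\<dots> \<le> distortion m k (2 * (k + 1) * n + 2 * (k + 1))"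
    using dG_le_length[OF w(1)]
    by (intro le_distortion[OF c mono w(1) iw]) (auto simp: w_def N_def)
  finally show ?thesis .
qed

theorem distortion_simeq_power:
  assumes m: "1 \<le> m" and km: "k \<le> m" and mk: "m \<le> k + 1"
  shows "distortion m k \<simeq>\<^sub>d (\<lambda>n. n ^ (k + 1))"
proof -
  obtain c where c: "\<And>w. valid_G m k w \<Longrightarrow> inH m k w \<Longrightarrow> dH m k w \<le> c * (dG m k w + 1) ^ (k + 1)"
    using dH_le_power_dG[OF km mk] by blast
  have "mono (\<lambda>n. c * (n + 1) ^ (k + 1))"
    by (intro monoI mult_le_mono2 power_mono) simp_all
  then have "distortion m k \<preceq>\<^sub>d (\<lambda>n. n ^ (k + 1))"
    using distortion_le[OF c] by (intro preceq_power_if_le[of _ c])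
  moreover have "(\<lambda>n. n ^ (k + 1)) \<preceq>\<^sub>d distortion m k"
    using power_le_distortion[OF assms] by (intro power_preceq_if_le[of "2 * (k + 1)"]) simp_all
  ultimately show ?thesis
    by (simp add: simeq_def)
qed

theorem lemma7p4:
  fixes m :: nat
  assumes "1 \<le> m"
  shows "distortion m m \<simeq>\<^sub>d (\<lambda>n. n ^ (m + 1)) \<and>
         distortion m (m - 1) \<simeq>\<^sub>d (\<lambda>n. n ^ m)"
  using distortion_simeq_power[of m m] distortion_simeq_power[of m "m - 1"] assms by simp

end
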